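(* Let $(B,\lfloor\cdot,\cdot\rfloor)$ be an SSD space with quadratic form $q$ and let $f:B\to\mathbb{R}\cup\{+\infty\}$ be a $w(B,B)$-lower semicontinuous proper convex function with $G_f\neq\emptyset$. Then $G_f$ is $q$-representable.
   Context: An SSD space is a pair $(B,\lfloor\cdot,\cdot\rfloor)$ with $B$ a nonzero real vector space and $\lfloor\cdot,\cdot\rfloor$ a symmetric bilinear form; $q(b)=\frac12\lfloor b,b\rfloor$. $w(B,B)$ is the coarsest topology on $B$ making all maps $b\mapsto\lfloor b,c\rfloor$ continuous. $f^{@}(b)=\sup_{c\in B}\{\lfloor c,b\rfloor-f(c)\}$, $\mathcal{P}_q(g)=\{b: g(b)=q(b)\}$, $G_f=\{b\in B: f(b)+f^{@}(b)=\lfloor b,b\rfloor\}$. A nonempty $A\subset B$ is $q$-positive if $q(b-c)\ge0$ for all $b,c\in A$; a $q$-positive set $A$ is $q$-representable if there exists a $w(B,B)$-lsc proper convex $g:B\to\mathbb{R}\cup\{+\infty\}$ with $g\ge q$ on $B$ and $\mathcal{P}_q(g)=A$. *)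

theory Defs
  imports "HOL-Analysis.Analysis"
begin

definition ssd_space :: "('a::real_vector \<Rightarrow> 'a \<Rightarrow> real) \<Rightarrow> bool" where
  "ssd_space s \<longleftrightarrow> (\<exists>x::'a. x \<noteq> 0)
     \<and> (\<forall>x y. s x y = s y x)
     \<and> (\<forall>x y z. s (x + y) z = s x z + s y z)
     \<and> (\<forall>a x z. s (a *\<^sub>R x) z = a * s x z)"

definition ssd_q :: "('a::real_vector \<Rightarrow> 'a \<Rightarrow> real) \<Rightarrow> 'a \<Rightarrow> real" where
  "ssd_q s b = s b b / 2"

definition wBB :: "('a \<Rightarrow> 'a \<Rightarrow> real) \<Rightarrow> 'a topology" where
  "wBB s = topology_generated_by {{b. s b c \<in> U} | c U. open U}"

definition lsc_on :: "'a topology \<Rightarrow> ('a \<Rightarrow> ereal) \<Rightarrow> bool" where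
  "lsc_on T f \<longleftrightarrow> (\<forall>r::real. closedin T {x \<in> topspace T. f x \<le> ereal r})"

definition proper_fn :: "('a \<Rightarrow> ereal) \<Rightarrow> bool" where
  "proper_fn f \<longleftrightarrow> (\<forall>x. f x \<noteq> -\<infinity>) \<and> (\<exists>x. f x \<noteq> \<infinity>)"

definition convex_fn :: "('a::real_vector \<Rightarrow> ereal) \<Rightarrow> bool" where
  "convex_fn f \<longleftrightarrow> (\<forall>x y t. 0 < t \<and> t < 1 \<longrightarrow>
      f (t *\<^sub>R x + (1 - t) *\<^sub>R y) \<le> ereal t * f x + ereal (1 - t) * f y)"

definition ssd_conj :: "('a \<Rightarrow> 'a \<Rightarrow> real) \<Rightarrow> ('a \<Rightarrow> ereal) \<Rightarrow> 'a \<Rightarrow> ereal" where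
  "ssd_conj s f b = (SUP c. ereal (s c b) - f c)"

definition P_q :: "('a::real_vector \<Rightarrow> 'a \<Rightarrow> real) \<Rightarrow> ('a \<Rightarrow> ereal) \<Rightarrow> 'a set" where
  "P_q s g = {b. g b = ereal (ssd_q s b)}"

definition G_set :: "('a \<Rightarrow> 'a \<Rightarrow> real) \<Rightarrow> ('a \<Rightarrow> ereal) \<Rightarrow> 'a set" where
  "G_set s f = {b. f b + ssd_conj s f b = ereal (s b b)}"

definition q_positive :: "('a::real_vector \<Rightarrow> 'a \<Rightarrow> real) \<Rightarrow> 'a set \<Rightarrow> bool" where
  "q_positive s A \<longleftrightarrow> A \<noteq> {} \<and> (\<forall>b\<in>A. \<forall>c\<in>A. ssd_q s (b - c) \<ge> 0)"

definition q_representable :: "('a::real_vector \<Rightarrow> 'a \<Rightarrow> real) \<Rightarrow> 'a set \<Rightarrow> bool" where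
  "q_representable s A \<longleftrightarrow> q_positive s A \<and>
     (\<exists>g. lsc_on (wBB s) g \<and> proper_fn g \<and> convex_fn g
          \<and> (\<forall>b. g b \<ge> ereal (ssd_q s b)) \<and> P_q s g = A)"

end

theory Submission
  imports Defs
begin

text \<open>Put \<open>g = (f + f\<^sup>@) / 2\<close>. As a supremum of \<open>w(B,B)\<close>-continuous affine functions,
  \<open>f\<^sup>@\<close> is \<open>w(B,B)\<close>-lsc and convex, so \<open>g\<close> is lsc and convex; the Fenchel--Young inequality
  \<open>f + f\<^sup>@ \<ge> \<lfloor>b,b\<rfloor>\<close> says \<open>g \<ge> q\<close>, and \<open>P\<^sub>q(g) = G\<^sub>f\<close> by definition. Finally the coincidence set of
  any convex majorant of \<open>q\<close> is \<open>q\<close>-positive: for \<open>b, c\<close> in it, convexity at the midpoint gives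
  \<open>q((b+c)/2) \<le> (q b + q c)/2\<close>, and the difference of the two sides is \<open>q(b-c)/4\<close>.\<close>

lemma ereal_less_add_split:
  fixes a b :: ereal
  assumes "a \<noteq> -\<infinity>" "b \<noteq> -\<infinity>" "ereal r < a + b"
  shows "\<exists>u. ereal u < a \<and> ereal (r - u) < b"
proof (cases a b rule: ereal2_cases)
  case (real_real u v)
  then show ?thesis using assms by (intro exI[of _ "u - (u + v - r) / 2"]) (auto simp: field_simps)
next
  case (real_PInf u)
  then show ?thesis by (intro exI[of _ "u - 1"]) auto
next
  case (PInf_real v)
  then show ?thesis by (intro exI[of _ "r - v + 1"]) auto
qed (use assms in auto)

lemma lsc_on_iff_openin_superlevel:
  "lsc_on T f \<longleftrightarrow> (\<forall>r::real. openin T {x \<in> topspace T. ereal r < f x})"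
proof -
  have "{x \<in> topspace T. ereal r < f x} = topspace T - {x \<in> topspace T. f x \<le> ereal r}" for r
    by auto
  then show ?thesis unfolding lsc_on_def closedin_def by auto
qed

lemma lsc_on_SUP:
  assumes "\<And>i. i \<in> I \<Longrightarrow> lsc_on T (f i)"
  shows "lsc_on T (\<lambda>x. SUP i\<in>I. f i x)"
  unfolding lsc_on_iff_openin_superlevel
proof
  fix r
  have "{x \<in> topspace T. ereal r < (SUP i\<in>I. f i x)} = (\<Union>i\<in>I. {x \<in> topspace T. ereal r < f i x})"
    by (auto simp: less_SUP_iff)
  then show "openin T {x \<in> topspace T. ereal r < (SUP i\<in>I. f i x)}"
    using assms unfolding lsc_on_iff_openin_superlevel by auto
qed

lemma lsc_on_add:
  assumes "lsc_on T f" "lsc_on T k" "\<And>x. f x \<noteq> -\<infinity>" "\<And>x. k x \<noteq> -\<infinity>"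
  shows "lsc_on T (\<lambda>x. f x + k x)"
  unfolding lsc_on_iff_openin_superlevel
proof
  fix r
  have "{x \<in> topspace T. ereal r < f x + k x} =
    (\<Union>u. {x \<in> topspace T. ereal u < f x} \<inter> {x \<in> topspace T. ereal (r - u) < k x})"
  proof (intro set_eqI iffI)
    fix x assume "x \<in> {x \<in> topspace T. ereal r < f x + k x}"
    then show "x \<in> (\<Union>u. {x \<in> topspace T. ereal u < f x} \<inter> {x \<in> topspace T. ereal (r - u) < k x})"
      using ereal_less_add_split[of "f x" "k x" r] assms(3,4) by auto
  next
    fix x assume "x \<in> (\<Union>u. {x \<in> topspace T. ereal u < f x} \<inter> {x \<in> topspace T. ereal (r - u) < k x})"
    then obtain u where "x \<in> topspace T" "ereal u < f x" "ereal (r - u) < k x" by auto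
    moreover have "ereal u + ereal (r - u) < f x + k x"
      using calculation by (intro ereal_add_strict_mono2) auto
    ultimately show "x \<in> {x \<in> topspace T. ereal r < f x + k x}" by auto
  qed
  then show "openin T {x \<in> topspace T. ereal r < f x + k x}"
    using assms(1,2) unfolding lsc_on_iff_openin_superlevel by (auto intro!: openin_Union openin_Int)
qed

lemma lsc_on_cmult:
  assumes "lsc_on T h" "0 < c"
  shows "lsc_on T (\<lambda>x. ereal c * h x)"
proof -
  have "ereal c * h x \<le> ereal r \<longleftrightarrow> h x \<le> ereal (r / c)" for x r
    using assms(2) by (cases "h x") (auto simp: field_simps)
  then show ?thesis using assms(1) unfolding lsc_on_def by simp
qed

lemma convex_fn_SUP:
  fixes f :: "'i \<Rightarrow> 'a::real_vector \<Rightarrow> ereal"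
  assumes "\<And>i. i \<in> I \<Longrightarrow> convex_fn (f i)"
  shows "convex_fn (\<lambda>x. SUP i\<in>I. f i x)"
  unfolding convex_fn_def
proof (intro allI impI)
  fix x y :: 'a and t :: real assume t: "0 < t \<and> t < 1"
  show "(SUP i\<in>I. f i (t *\<^sub>R x + (1 - t) *\<^sub>R y))
      \<le> ereal t * (SUP i\<in>I. f i x) + ereal (1 - t) * (SUP i\<in>I. f i y)"
  proof (rule SUP_least)
    fix i assume i: "i \<in> I"
    have "f i (t *\<^sub>R x + (1 - t) *\<^sub>R y) \<le> ereal t * f i x + ereal (1 - t) * f i y"
      using assms[OF i] t unfolding convex_fn_def by auto
    also have "\<dots> \<le> ereal t * (SUP i\<in>I. f i x) + ereal (1 - t) * (SUP i\<in>I. f i y)"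
      using i t by (intro add_mono ereal_mult_left_mono SUP_upper) auto
    finally show "f i (t *\<^sub>R x + (1 - t) *\<^sub>R y) \<le> \<dots>" .
  qed
qed

lemma convex_fn_add:
  fixes f k :: "'a::real_vector \<Rightarrow> ereal"
  assumes "convex_fn f" "convex_fn k"
  shows "convex_fn (\<lambda>x. f x + k x)"
  unfolding convex_fn_def
proof (intro allI impI)
  fix x y :: 'a and t :: real assume t: "0 < t \<and> t < 1"
  let ?z = "t *\<^sub>R x + (1 - t) *\<^sub>R y"
  have "f ?z + k ?z \<le> (ereal t * f x + ereal (1 - t) * f y) + (ereal t * k x + ereal (1 - t) * k y)"
    using assms t unfolding convex_fn_def by (intro add_mono) auto
  also have "\<dots> = ereal t * (f x + k x) + ereal (1 - t) * (f y + k y)"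
    using t by (simp add: ereal_pos_distrib add_ac)
  finally show "f ?z + k ?z \<le> ereal t * (f x + k x) + ereal (1 - t) * (f y + k y)" .
qed

lemma convex_fn_cmult:
  fixes h :: "'a::real_vector \<Rightarrow> ereal"
  assumes "convex_fn h" "0 \<le> c"
  shows "convex_fn (\<lambda>x. ereal c * h x)"
  unfolding convex_fn_def
proof (intro allI impI)
  fix x y :: 'a and t :: real assume t: "0 < t \<and> t < 1"
  let ?z = "t *\<^sub>R x + (1 - t) *\<^sub>R y"
  have "ereal c * h ?z \<le> ereal c * (ereal t * h x + ereal (1 - t) * h y)"
    using assms t unfolding convex_fn_def by (intro ereal_mult_left_mono) auto
  also have "\<dots> = ereal t * (ereal c * h x) + ereal (1 - t) * (ereal c * h y)"
    using assms(2) by (simp add: ereal_pos_distrib mult_ac)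
  finally show "ereal c * h ?z \<le> ereal t * (ereal c * h x) + ereal (1 - t) * (ereal c * h y)" .
qed

lemma convex_fn_affine:
  fixes l :: "'a::real_vector \<Rightarrow> real"
  assumes "linear l"
  shows "convex_fn (\<lambda>x. ereal (l x) - a)"
  unfolding convex_fn_def
proof (intro allI impI)
  fix x y :: 'a and t :: real assume t: "0 < t \<and> t < 1"
  have l: "l (t *\<^sub>R x + (1 - t) *\<^sub>R y) = t * l x + (1 - t) * l y"
    using assms by (simp add: linear_add linear_scale)
  show "ereal (l (t *\<^sub>R x + (1 - t) *\<^sub>R y)) - a \<le> ereal t * (ereal (l x) - a) + ereal (1 - t) * (ereal (l y) - a)"
    unfolding l using t by (cases a) (auto simp: algebra_simps)
qed

lemma ssd_space_linear_left: "ssd_space s \<Longrightarrow> linear (\<lambda>x. s x z)"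
  unfolding ssd_space_def by (intro linearI) auto

lemma ssd_space_linear_right:
  assumes "ssd_space s"
  shows "linear (\<lambda>x. s z x)"
proof -
  have "(\<lambda>x. s z x) = (\<lambda>x. s x z)" using assms by (auto simp: ssd_space_def)
  then show ?thesis using ssd_space_linear_left[OF assms] by (simp only:)
qed

lemma ssd_q_midpoint:
  assumes "ssd_space s"
  shows "ssd_q s ((1/2) *\<^sub>R b + (1/2) *\<^sub>R c) = (ssd_q s b + ssd_q s c) / 2 - ssd_q s (b - c) / 4"
proof -
  interpret l: linear "\<lambda>x. s x z" for z by (rule ssd_space_linear_left[OF assms])
  interpret r: linear "\<lambda>x. s z x" for z by (rule ssd_space_linear_right[OF assms])
  have "s c b = s b c" using assms by (simp add: ssd_space_def)
  then show ?thesis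
    by (simp add: ssd_q_def l.add r.add l.scale r.scale l.diff r.diff field_simps)
qed

lemma topspace_wBB [simp]: "topspace (wBB s) = UNIV"
proof -
  have "UNIV \<in> {{b. s b c \<in> U} | c U. open U}"
    by (intro CollectI exI[of _ undefined] exI[of _ UNIV]) auto
  then show ?thesis unfolding wBB_def topology_generated_by_topspace by blast
qed

lemma openin_wBB: "open U \<Longrightarrow> openin (wBB s) {b. s b c \<in> U}"
  unfolding wBB_def by (rule topology_generated_by_Basis) blast

lemma lsc_on_wBB_affine:
  assumes "ssd_space s"
  shows "lsc_on (wBB s) (\<lambda>b. ereal (s c b) - a)"
  unfolding lsc_on_iff_openin_superlevel topspace_wBB
proof
  fix r
  show "openin (wBB s) {b \<in> UNIV. ereal r < ereal (s c b) - a}"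
  proof (cases a)
    case (real u)
    have "{b \<in> UNIV. ereal r < ereal (s c b) - a} = {b. s b c \<in> {r + u<..}}"
      using real assms by (auto simp: ssd_space_def)
    then show ?thesis using openin_wBB[of "{r + u<..}" s c] by simp
  next
    case PInf
    then show ?thesis by simp
  next
    case MInf
    then show ?thesis using openin_topspace[of "wBB s"] by simp
  qed
qed

lemma ssd_conj_ge: "ereal (s c b) - f c \<le> ssd_conj s f b"
  unfolding ssd_conj_def by (rule SUP_upper) simp

lemma ssd_conj_neq_minf:
  assumes "proper_fn f"
  shows "ssd_conj s f b \<noteq> -\<infinity>"
proof -
  obtain c where "f c \<noteq> \<infinity>" "f c \<noteq> -\<infinity>" using assms unfolding proper_fn_def by auto
  then have "ereal (s c b) - f c \<noteq> -\<infinity>" by (cases "f c") auto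
  then show ?thesis using ssd_conj_ge[of s c b f] by auto
qed

lemma fenchel_young:
  assumes "proper_fn f"
  shows "ereal (s b b) \<le> f b + ssd_conj s f b"
proof (cases "f b")
  case (real r)
  then show ?thesis using ssd_conj_ge[of s b b f] by (cases "ssd_conj s f b") auto
next
  case PInf
  then show ?thesis using ssd_conj_neq_minf[OF assms, of s b] by auto
qed (use assms in \<open>auto simp: proper_fn_def\<close>)

lemma lsc_on_ssd_conj: "ssd_space s \<Longrightarrow> lsc_on (wBB s) (ssd_conj s f)"
  unfolding ssd_conj_def[abs_def] by (intro lsc_on_SUP lsc_on_wBB_affine)

lemma convex_fn_ssd_conj: "ssd_space s \<Longrightarrow> convex_fn (ssd_conj s f)"
  unfolding ssd_conj_def[abs_def] by (intro convex_fn_SUP convex_fn_affine ssd_space_linear_right)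

lemma q_positive_P_q:
  assumes "ssd_space s" "convex_fn g" "\<And>b. ereal (ssd_q s b) \<le> g b" "P_q s g \<noteq> {}"
  shows "q_positive s (P_q s g)"
  unfolding q_positive_def
proof (intro conjI ballI)
  fix b c assume "b \<in> P_q s g" "c \<in> P_q s g"
  then have gb: "g b = ereal (ssd_q s b)" and gc: "g c = ereal (ssd_q s c)"
    by (auto simp: P_q_def)
  let ?m = "(1/2) *\<^sub>R b + (1/2) *\<^sub>R c"
  have "ereal (ssd_q s ?m) \<le> g ?m" by (rule assms(3))
  also have "\<dots> \<le> ereal (1/2) * g b + ereal (1/2) * g c"
    using assms(2)[unfolded convex_fn_def, rule_format, of "1/2" b c] by simp
  also have "\<dots> = ereal ((ssd_q s b + ssd_q s c) / 2)"
    by (simp add: gb gc field_simps)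
  finally have "ssd_q s ?m \<le> (ssd_q s b + ssd_q s c) / 2" by simp
  then show "0 \<le> ssd_q s (b - c)"
    using ssd_q_midpoint[OF assms(1), of b c] by linarith
qed (fact assms(4))

lemma q_representable_P_q:
  assumes "ssd_space s" "lsc_on (wBB s) g" "convex_fn g"
    and "\<And>b. ereal (ssd_q s b) \<le> g b" "P_q s g \<noteq> {}"
  shows "q_representable s (P_q s g)"
proof -
  have "proper_fn g"
  proof -
    obtain b where "g b = ereal (ssd_q s b)" using assms(5) by (auto simp: P_q_def)
    moreover have "g x \<noteq> -\<infinity>" for x using assms(4)[of x] by auto
    ultimately show ?thesis unfolding proper_fn_def by (auto intro!: exI[of _ b])
  qed
  then show ?thesis
    unfolding q_representable_def using q_positive_P_q assms by blast
qed

theorem mainTheorem10: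
  fixes s :: "'a::real_vector \<Rightarrow> 'a \<Rightarrow> real" and f :: "'a \<Rightarrow> ereal"
  assumes "ssd_space s"
    and "lsc_on (wBB s) f" and "proper_fn f" and "convex_fn f"
    and "G_set s f \<noteq> {}"
  shows "q_representable s (G_set s f)"
proof -
  define g where "g b = ereal (1/2) * (f b + ssd_conj s f b)" for b
  have f_neq_minf: "f b \<noteq> -\<infinity>" for b using assms(3) by (simp add: proper_fn_def)
  have "lsc_on (wBB s) g"
    unfolding g_def using assms(1,2) f_neq_minf ssd_conj_neq_minf[OF assms(3)]
    by (intro lsc_on_cmult lsc_on_add lsc_on_ssd_conj) auto
  moreover have "convex_fn g"
    unfolding g_def using assms(1,4) by (intro convex_fn_cmult convex_fn_add convex_fn_ssd_conj) auto
  moreover have "ereal (ssd_q s b) \<le> g b" for b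
    using ereal_mult_left_mono[OF fenchel_young[OF assms(3), of s b], of "ereal (1/2)"]
    by (simp add: g_def ssd_q_def)
  moreover have "P_q s g = G_set s f"
  proof -
    have "g b = ereal (ssd_q s b) \<longleftrightarrow> f b + ssd_conj s f b = ereal (s b b)" for b
      using f_neq_minf[of b] ssd_conj_neq_minf[OF assms(3), of s b]
      by (cases "f b"; cases "ssd_conj s f b") (auto simp: g_def ssd_q_def)
    then show ?thesis by (auto simp: P_q_def G_set_def)
  qed
  ultimately show ?thesis using q_representable_P_q assms(1,5) by metis
qed

end
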